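(* For nonnegative integers $n,m$, \[\sum_{r=0}^n\sum_{s=0}^m\mathcal{K}_{n,m;r,s}(z,w;q)\,\Phi_{r,s}(1,1;z,w;q)=\Phi_{n,m}(1,1;z,w;q)\] and \[\sum_{r=0}^n\sum_{s=0}^m\mathcal{K}_{n,m;r,s}(z/q,w;q)\,\Phi_{r,s}(u,v;z,w;q)=\Phi_{n,m}(uz,vw;z,w;q).\]
   Context: For $n\in\mathbb{Z}$, $(a;q)_n=(a;q)_\infty/(aq^n;q)_\infty$ ($1/(q;q)_n=0$ for $n<0$), $(a_1,\dots,a_k;q)_n=\prod_i(a_i;q)_n$. For integers $n,m$: $\Phi_{n,m}(z,w;q):=\frac{(zwq;q)_{n+m}}{(q,zq,zwq;q)_n(q,wq,zwq;q)_m}$; \[\mathcal{K}_{n,m;r,s}(z,w;q):=\frac{z^rw^sq^{r^2-rs+s^2}}{(q;q)_{n-r}(q;q)_{m-s}};\] and \[\Phi_{n,m}(u,v;z,w;q):=\Phi_{n,m}(z/q,w;q)-\frac{uz}{(z;q)_2}\Phi_{n-1,m}(zq,w/q;q)+\frac{uvzw^2}{(w,zw;q)_2}\Phi_{n-1,m-1}(z,wq;q).\] (One has $\Phi_{n,m}(1,1;z,w;q)=\Phi_{n,m}(z,w;q)$.) *)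

theory Defs
  imports Complex_Main
begin

text \<open>q-Pochhammer symbol (a;q)_n for integer n, defined as (a;q)_inf/(aq^n;q)_inf:
  for n >= 0 the finite product prod_{k<n} (1 - a q^k);
  for n < 0 the value 1 / prod_{k=1}^{-n} (1 - a q^(-k)).\<close>
definition qpoch :: "complex \<Rightarrow> complex \<Rightarrow> int \<Rightarrow> complex" where
  "qpoch a q n =
     (if 0 \<le> n then (\<Prod>k<nat n. (1 - a * q ^ k))
      else 1 / (\<Prod>k<nat (- n). (1 - a / q ^ (k + 1))))"

text \<open>Phi_{n,m}(z,w;q) = (zwq;q)_{n+m} / ((q,zq,zwq;q)_n (q,wq,zwq;q)_m).
  Since 1/(q;q)_n = 0 for n < 0, the whole expression is 0 when n < 0 or m < 0.\<close>
definition Phi :: "int \<Rightarrow> int \<Rightarrow> complex \<Rightarrow> complex \<Rightarrow> complex \<Rightarrow> complex" where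
  "Phi n m z w q =
     (if n < 0 \<or> m < 0 then 0
      else qpoch (z * w * q) q (n + m) /
        (qpoch q q n * qpoch (z * q) q n * qpoch (z * w * q) q n *
         qpoch q q m * qpoch (w * q) q m * qpoch (z * w * q) q m))"

definition Kc :: "nat \<Rightarrow> nat \<Rightarrow> nat \<Rightarrow> nat \<Rightarrow> complex \<Rightarrow> complex \<Rightarrow> complex \<Rightarrow> complex" where
  "Kc n m r s z w q =
     z ^ r * w ^ s * q ^ (r\<^sup>2 + s\<^sup>2 - r * s) /
       (qpoch q q (int n - int r) * qpoch q q (int m - int s))"

definition Phi4 :: "int \<Rightarrow> int \<Rightarrow> complex \<Rightarrow> complex \<Rightarrow> complex \<Rightarrow> complex \<Rightarrow> complex \<Rightarrow> complex" where
  "Phi4 n m u v z w q =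
     Phi n m (z / q) w q
     - u * z / qpoch z q 2 * Phi (n - 1) m (z * q) (w / q) q
     + u * v * z * w\<^sup>2 / (qpoch w q 2 * qpoch (z * w) q 2) * Phi (n - 1) (m - 1) z (w * q) q"

end

theory Submission
  imports Defs
begin

text \<open>Write R_a(r,s) = (aq;q)_(r+s) / ((aq;q)_r (aq;q)_s). After clearing denominators,
  K_(n,m;r,s)(x,y) Phi_(r,s)(x,y) is, up to a factor not depending on r and s, the product of
  R_(xy)(r,s) with [n,r] [m,s] x^r y^s q^(r^2-rs+s^2) (xq^(r+1);q)_(n-r) (yq^(s+1);q)_(m-s).
  Expanding R_a(r,s) as a q-Chu-Vandermonde type sum over k and exchanging summations, the sums
  over r and s separate and evaluate to [n,k] x^k and [m,k] y^k; what remains is a second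
  expansion of R_(xy)(n,m). Hence the sum of K_(n,m;r,s)(x,y) Phi_(r,s)(x,y) is Phi_(n,m)(x,y)
  for generic x and y.

  Three contiguous relations make each of the three terms of Phi_(n,m)(1,1;z,w) a rational
  multiple of Phi_(n,m)(z,w), and these multiples add up to 1; this is the first identity. For
  the second, shifting r (and s) turns K_(n,m;r,s)(z/q,w) into z K_(n-1,m;r-1,s)(zq,w/q) and into
  zw K_(n-1,m-1;r-1,s-1)(z,wq), so the identity for Phi applies to each term of Phi_(r,s)(u,v;z,w).\<close>

section \<open>q-Pochhammer symbols and Gaussian binomial coefficients\<close>

definition qprod :: "'a::comm_ring_1 \<Rightarrow> 'a \<Rightarrow> nat \<Rightarrow> 'a" where
  "qprod a q n = (\<Prod>k<n. 1 - a * q ^ k)"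

lemma qpoch_of_nat: "qpoch a q (int n) = qprod a q n"
  by (simp add: qpoch_def qprod_def)

lemma qprod_0 [simp]: "qprod a q 0 = 1"
  by (simp add: qprod_def)

lemma qprod_Suc: "qprod a q (Suc n) = qprod a q n * (1 - a * q ^ n)"
  by (simp add: qprod_def)

lemma qprod_Suc_shift: "qprod a q (Suc n) = (1 - a) * qprod (a * q) q n"
  by (induction n) (simp_all add: qprod_Suc[of a q "Suc _"] qprod_Suc[of "a * q"] qprod_Suc[of a q 0] mult_ac)

lemma qprod_Suc_shift_eq: "qprod a q n * (1 - a * q ^ n) = (1 - a) * qprod (a * q) q n"
  by (metis qprod_Suc qprod_Suc_shift)

lemma qpoch_2: "qpoch c q 2 = (1 - c) * (1 - c * q)"
  using qpoch_of_nat[of c q 2] by (simp add: numeral_2_eq_2 qprod_Suc)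

lemma qprod_add: "qprod a q (n + k) = qprod a q n * qprod (a * q ^ n) q k"
  by (induction k) (simp_all add: qprod_Suc power_add mult_ac)

lemma qprod_nonzeroI: "(\<And>k. k < n \<Longrightarrow> a * q ^ k \<noteq> 1) \<Longrightarrow> qprod a q n \<noteq> (0::'a::idom)"
  by (simp add: qprod_def)

lemma qprod_nonzero_mono: "qprod a q n \<noteq> (0::'a::idom) \<Longrightarrow> k \<le> n \<Longrightarrow> qprod a q k \<noteq> 0"
  using qprod_add[of a q k "n - k"] by auto

fun qbinom :: "'a::comm_ring_1 \<Rightarrow> nat \<Rightarrow> nat \<Rightarrow> 'a" where
  "qbinom q 0 0 = 1"
| "qbinom q 0 (Suc k) = 0"
| "qbinom q (Suc n) 0 = 1"
| "qbinom q (Suc n) (Suc k) = qbinom q n k + q ^ Suc k * qbinom q n (Suc k)"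

lemma qbinom_0_right [simp]: "qbinom q n 0 = 1"
  by (cases n) auto

lemma qbinom_eq_0 [simp]: "n < k \<Longrightarrow> qbinom q n k = 0"
proof (induction n arbitrary: k)
  case 0 then show ?case by (cases k) auto
next
  case (Suc n) then show ?case by (cases k) auto
qed

lemma power_diff_mult: "k \<le> n \<Longrightarrow> (x::'a::monoid_mult) ^ k * x ^ (n - k) = x ^ n"
  by (metis le_add_diff_inverse power_add)

lemma qbinom_mult_qprod:
  "k \<le> n \<Longrightarrow> qbinom q n k * qprod q q k * qprod q q (n - k) = qprod q q n"
proof (induction n arbitrary: k)
  case 0 then show ?case by simp
next
  case (Suc n)
  show ?case
  proof (cases k)
    case 0 then show ?thesis by simp
  next
    case (Suc j)
    have j: "j \<le> n" using Suc.prems Suc by simp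
    have "qbinom q n j * qprod q q (Suc j) * qprod q q (n - j)
        = qbinom q n j * qprod q q j * qprod q q (n - j) * (1 - q ^ Suc j)"
      by (simp add: qprod_Suc mult_ac)
    then have left: "qbinom q n j * qprod q q (Suc j) * qprod q q (n - j) = qprod q q n * (1 - q ^ Suc j)"
      unfolding Suc.IH[OF j] .
    have right: "q ^ Suc j * qbinom q n (Suc j) * qprod q q (Suc j) * qprod q q (n - j)
        = q ^ Suc j * qprod q q n * (1 - q ^ (n - j))"
    proof (cases "j < n")
      case True
      then have "n - j = Suc (n - Suc j)" by simp
      then have "q ^ Suc j * qbinom q n (Suc j) * qprod q q (Suc j) * qprod q q (n - j)
          = q ^ Suc j * (qbinom q n (Suc j) * qprod q q (Suc j) * qprod q q (n - Suc j)) * (1 - q ^ (n - j))"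
        by (simp only: qprod_Suc) (simp add: mult_ac)
      then show ?thesis using Suc.IH[of "Suc j"] True by simp
    qed (use j in simp)
    have "qbinom q (Suc n) k * qprod q q k * qprod q q (Suc n - k)
        = qbinom q n j * qprod q q (Suc j) * qprod q q (n - j)
          + q ^ Suc j * qbinom q n (Suc j) * qprod q q (Suc j) * qprod q q (n - j)"
      using Suc by (simp add: algebra_simps)
    also have "\<dots> = qprod q q n * (1 - q ^ Suc j * q ^ (n - j))"
      unfolding left right by (simp add: algebra_simps)
    also have "\<dots> = qprod q q (Suc n)"
      using j by (simp add: qprod_Suc mult.assoc power_diff_mult)
    finally show ?thesis .
  qed
qed

lemma qbinom_Suc_right_ratio:
  "qbinom q m (Suc k) * (1 - q ^ Suc k) = qbinom q m k * (1 - q ^ (m - k))"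
proof (induction m arbitrary: k)
  case 0 then show ?case by (cases k) auto
next
  case (Suc m)
  show ?case
  proof (cases k)
    case 0
    have IH: "qbinom q m (Suc 0) * (1 - q) = 1 - q ^ m"
      using Suc.IH[of 0] by simp
    have "qbinom q (Suc m) (Suc 0) * (1 - q) = (1 - q) + q * (qbinom q m (Suc 0) * (1 - q))"
      by (simp add: algebra_simps)
    also have "\<dots> = 1 - q ^ Suc m"
      unfolding IH by (simp add: algebra_simps)
    finally show ?thesis using 0 by simp
  next
    case (Suc j)
    have "qbinom q (Suc m) (Suc (Suc j)) * (1 - q ^ Suc (Suc j))
        = qbinom q m (Suc j) * (1 - q ^ Suc (Suc j))
          + q ^ Suc (Suc j) * (qbinom q m (Suc (Suc j)) * (1 - q ^ Suc (Suc j)))"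
      by (simp only: qbinom.simps) (simp add: algebra_simps)
    also have "\<dots> = qbinom q m (Suc j) * (1 - q ^ Suc (Suc j) * q ^ (m - Suc j))"
      unfolding Suc.IH[of "Suc j"] by (simp add: algebra_simps)
    also have "\<dots> = qbinom q m (Suc j) * (1 - q ^ Suc j * q ^ (m - j))"
    proof (cases "Suc j \<le> m")
      case True
      then have "q ^ Suc (Suc j) * q ^ (m - Suc j) = q ^ Suc m" "q ^ Suc j * q ^ (m - j) = q ^ Suc m"
        using power_diff_mult[of "Suc (Suc j)" "Suc m" q] power_diff_mult[of "Suc j" "Suc m" q] by simp_all
      then show ?thesis by (simp only:)
    qed simp
    also have "\<dots> = qbinom q m j * (1 - q ^ (m - j)) + q ^ Suc j * qbinom q m (Suc j) * (1 - q ^ (m - j))"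
      unfolding Suc.IH[of j, symmetric] by (simp add: algebra_simps)
    also have "\<dots> = qbinom q (Suc m) (Suc j) * (1 - q ^ (Suc m - Suc j))"
      by (simp add: algebra_simps)
    finally show ?thesis using Suc by simp
  qed
qed

lemma qbinom_Suc_left_ratio:
  "qbinom q (Suc m) j * (1 - q ^ (Suc m - j)) = qbinom q m j * (1 - q ^ Suc m)"
proof -
  have "qbinom q (Suc m) j * (1 - q ^ (Suc m - j)) = qbinom q (Suc m) (Suc j) * (1 - q ^ Suc j)"
    using qbinom_Suc_right_ratio[of q "Suc m" j] by simp
  also have "\<dots> = qbinom q m j * (1 - q ^ Suc j) + q ^ Suc j * (qbinom q m (Suc j) * (1 - q ^ Suc j))"
    by (simp add: algebra_simps)
  also have "\<dots> = qbinom q m j * (1 - q ^ Suc j * q ^ (m - j))"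
    unfolding qbinom_Suc_right_ratio by (simp add: algebra_simps)
  also have "\<dots> = qbinom q m j * (1 - q ^ Suc m)"
  proof (cases "j \<le> m")
    case True
    then have "q ^ Suc j * q ^ (m - j) = q ^ Suc m"
      using power_diff_mult[of "Suc j" "Suc m" q] by simp
    then show ?thesis by (simp only:)
  qed simp
  finally show ?thesis .
qed

lemma qbinom_qprod_Suc:
  "qbinom q m (Suc k) * qprod q q (Suc k) = qprod q q k * qbinom q m k * (1 - q ^ (m - k))"
  using qbinom_Suc_right_ratio[of q m k] by (simp add: qprod_Suc mult_ac)

lemma sum_qbinom_Suc:
  "(\<Sum>k\<le>Suc n. qbinom q (Suc n) k * g k)
     = (\<Sum>k\<le>n. qbinom q n k * g (Suc k)) + (\<Sum>k\<le>n. q ^ k * qbinom q n k * g k)"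
proof -
  have "(\<Sum>k\<le>Suc n. qbinom q (Suc n) k * g k)
      = g 0 + (\<Sum>k\<le>n. qbinom q (Suc n) (Suc k) * g (Suc k))"
    by (subst sum.atMost_Suc_shift) simp
  also have "\<dots> = (\<Sum>k\<le>n. qbinom q n k * g (Suc k))
      + (g 0 + (\<Sum>k\<le>n. q ^ Suc k * qbinom q n (Suc k) * g (Suc k)))"
    by (simp add: algebra_simps sum.distrib)
  also have "g 0 + (\<Sum>k\<le>n. q ^ Suc k * qbinom q n (Suc k) * g (Suc k))
      = (\<Sum>k\<le>Suc n. q ^ k * qbinom q n k * g k)"
    by (subst sum.atMost_Suc_shift) simp
  also have "\<dots> = (\<Sum>k\<le>n. q ^ k * qbinom q n k * g k)"
    by simp
  finally show ?thesis .
qed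

section \<open>Summation identities for Gaussian binomial coefficients\<close>

lemma sum_qbinom_qprod_Suc:
  "(\<Sum>k\<le>Suc n. qbinom q (Suc n) k * f k * qprod (a * q ^ (k + 1)) q (Suc n - k))
     = (\<Sum>k\<le>n. qbinom q n k * (f (Suc k) + q ^ k * f k * (1 - a * q ^ (k + 1))) * qprod (a * q ^ (k + 2)) q (n - k))"
proof -
  have shift: "qprod (a * q ^ (k + 1)) q (Suc n - k) = (1 - a * q ^ (k + 1)) * qprod (a * q ^ (k + 2)) q (n - k)"
    if "k \<le> n" for k
    using that qprod_Suc_shift[of "a * q ^ (k + 1)" q "n - k"] by (simp add: Suc_diff_le mult_ac)
  have "(\<Sum>k\<le>Suc n. qbinom q (Suc n) k * f k * qprod (a * q ^ (k + 1)) q (Suc n - k))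
      = (\<Sum>k\<le>n. qbinom q n k * (f (Suc k) * qprod (a * q ^ (k + 2)) q (n - k)))
        + (\<Sum>k\<le>n. q ^ k * qbinom q n k * (f k * qprod (a * q ^ (k + 1)) q (Suc n - k)))"
    using sum_qbinom_Suc[of q n "\<lambda>k. f k * qprod (a * q ^ (k + 1)) q (Suc n - k)"] by (simp add: mult.assoc)
  also have "\<dots> = (\<Sum>k\<le>n. qbinom q n k * (f (Suc k) + q ^ k * f k * (1 - a * q ^ (k + 1)))
      * qprod (a * q ^ (k + 2)) q (n - k))"
    unfolding sum.distrib[symmetric]
    by (rule sum.cong) (simp_all only: atMost_iff shift, simp_all add: algebra_simps)
  finally show ?thesis .
qed

lemma power_mult_self: "(y::'a::monoid_mult) ^ (r * 2) = y ^ r * y ^ r"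
  by (simp add: power_mult power2_eq_square)

definition qbinom_chain_sum :: "'a::comm_ring_1 \<Rightarrow> nat \<Rightarrow> nat \<Rightarrow> 'a \<Rightarrow> 'a" where
  "qbinom_chain_sum q n k x =
     (\<Sum>r\<le>n. qbinom q n r * qbinom q r k * x ^ r * q ^ (r * (r - k)) * qprod (x * q ^ (r + 1)) q (n - r))"

lemma qbinom_chain_sum_Suc:
  "qbinom_chain_sum q (Suc n) k x = qbinom_chain_sum q n k (x * q)
     + (\<Sum>r\<le>n. qbinom q n r * (qbinom q (Suc r) k * q ^ (Suc r * (Suc r - k))
         - qbinom q r k * q ^ (r * (r - k) + 2 * r + 1)) * x ^ Suc r * qprod (x * q ^ (r + 2)) q (n - r))"
proof -
  have "qbinom_chain_sum q (Suc n) k x = (\<Sum>r\<le>Suc n. qbinom q (Suc n) r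
      * (qbinom q r k * x ^ r * q ^ (r * (r - k))) * qprod (x * q ^ (r + 1)) q (Suc n - r))"
    by (simp add: qbinom_chain_sum_def mult.assoc del: sum.atMost_Suc)
  also have "\<dots> = (\<Sum>r\<le>n. qbinom q n r * (qbinom q (Suc r) k * x ^ Suc r * q ^ (Suc r * (Suc r - k))
      + q ^ r * (qbinom q r k * x ^ r * q ^ (r * (r - k))) * (1 - x * q ^ (r + 1))) * qprod (x * q ^ (r + 2)) q (n - r))"
    by (rule sum_qbinom_qprod_Suc)
  also have "\<dots> = qbinom_chain_sum q n k (x * q)
     + (\<Sum>r\<le>n. qbinom q n r * (qbinom q (Suc r) k * q ^ (Suc r * (Suc r - k))
         - qbinom q r k * q ^ (r * (r - k) + 2 * r + 1)) * x ^ Suc r * qprod (x * q ^ (r + 2)) q (n - r))"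
    by (simp add: qbinom_chain_sum_def sum.distrib[symmetric] power_add power_mult_distrib power_mult_self
        algebra_simps)
  finally show ?thesis .
qed

lemma qbinom_chain_sum_Suc_0: "qbinom_chain_sum q (Suc n) 0 x = qbinom_chain_sum q n 0 (x * q)"
  unfolding qbinom_chain_sum_Suc by (simp add: algebra_simps mult_2_right)

lemma qbinom_chain_sum_Suc_Suc:
  "q ^ j * qbinom_chain_sum q (Suc n) (Suc j) x
     = q ^ j * qbinom_chain_sum q n (Suc j) (x * q) + x * qbinom_chain_sum q n j (x * q)"
proof -
  have summand: "q ^ j * (qbinom q (Suc r) (Suc j) * q ^ (Suc r * (Suc r - Suc j))
        - qbinom q r (Suc j) * q ^ (r * (r - Suc j) + 2 * r + 1)) * x ^ Suc r
      = x * (qbinom q r j * (x * q) ^ r * q ^ (r * (r - j)))" for r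
  proof (cases "j \<le> r")
    case True
    then obtain d where r: "r = j + d" using le_Suc_ex by blast
    show ?thesis
    proof (cases d)
      case 0
      then show ?thesis unfolding r by (simp add: power_mult_distrib power_add algebra_simps)
    next
      case (Suc d')
      have "Suc j + Suc r * (r - j) = r * (r - Suc j) + 2 * r + 1" "j + Suc r * (r - j) = r + r * (r - j)"
        unfolding r Suc by (simp_all add: algebra_simps)
      then have pw: "q ^ Suc j * q ^ (Suc r * (r - j)) = q ^ (r * (r - Suc j) + 2 * r + 1)"
        "q ^ j * q ^ (Suc r * (r - j)) = q ^ r * q ^ (r * (r - j))"
        by (metis power_add)+
      have "q ^ j * (qbinom q (Suc r) (Suc j) * q ^ (Suc r * (Suc r - Suc j))
          - qbinom q r (Suc j) * q ^ (r * (r - Suc j) + 2 * r + 1)) * x ^ Suc r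
        = x ^ Suc r * (qbinom q r j * (q ^ j * q ^ (Suc r * (r - j))) + q ^ j * qbinom q r (Suc j)
          * (q ^ Suc j * q ^ (Suc r * (r - j)) - q ^ (r * (r - Suc j) + 2 * r + 1)))"
        by (simp add: algebra_simps)
      then show ?thesis unfolding pw by (simp add: power_mult_distrib algebra_simps)
    qed
  qed simp
  have "q ^ j * qbinom_chain_sum q (Suc n) (Suc j) x = q ^ j * qbinom_chain_sum q n (Suc j) (x * q)
      + (\<Sum>r\<le>n. qbinom q n r * (q ^ j * (qbinom q (Suc r) (Suc j) * q ^ (Suc r * (Suc r - Suc j))
        - qbinom q r (Suc j) * q ^ (r * (r - Suc j) + 2 * r + 1)) * x ^ Suc r) * qprod (x * q ^ (r + 2)) q (n - r))"
    unfolding qbinom_chain_sum_Suc by (simp add: distrib_left sum_distrib_left mult_ac)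
  also have "\<dots> = q ^ j * qbinom_chain_sum q n (Suc j) (x * q) + x * qbinom_chain_sum q n j (x * q)"
    unfolding summand by (simp add: qbinom_chain_sum_def sum_distrib_left mult_ac)
  finally show ?thesis .
qed

lemma qbinom_chain_sum_eq:
  fixes q x :: "'a::idom"
  assumes "q \<noteq> 0"
  shows "qbinom_chain_sum q n k x = qbinom q n k * x ^ k"
proof (induction n arbitrary: k x)
  case 0 then show ?case by (cases k) (simp_all add: qbinom_chain_sum_def)
next
  case (Suc n)
  show ?case
  proof (cases k)
    case 0 then show ?thesis by (simp add: qbinom_chain_sum_Suc_0 Suc.IH)
  next
    case (Suc j)
    have "q ^ j * qbinom_chain_sum q (Suc n) k x = q ^ j * (qbinom q (Suc n) k * x ^ k)"
      unfolding Suc qbinom_chain_sum_Suc_Suc Suc.IH by (simp add: power_mult_distrib algebra_simps)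
    then show ?thesis using assms by simp
  qed
qed

lemma qprod_shift_power_expansion:
  "(\<Sum>k\<le>n. qbinom q n k * qbinom q m k * qprod q q k * a ^ k * q ^ (k * k) * qprod (a * q ^ (k + 1)) q (n - k))
    = qprod (a * q ^ (m + 1)) q n"
proof (induction n arbitrary: a)
  case 0 then show ?case by simp
next
  case (Suc n)
  define f where "f a k = qbinom q m k * qprod q q k * a ^ k * q ^ (k * k)" for a k
  have step: "f a (Suc k) + q ^ k * f a k * (1 - a * q ^ (k + 1)) = (1 - a * q ^ (m + 1)) * f (a * q) k" for k
  proof (cases "k \<le> m")
    case True
    then have "Suc k * Suc k + (m - k) = k + k * k + (m + 1)"
      by (simp add: algebra_simps)
    then have pw: "q ^ (Suc k * Suc k) * q ^ (m - k) = q ^ k * q ^ (k * k) * q ^ (m + 1)"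
      by (metis power_add)
    have "f a (Suc k) = qbinom q m k * qprod q q k * a ^ Suc k * (q ^ (Suc k * Suc k) - q ^ (Suc k * Suc k) * q ^ (m - k))"
      unfolding f_def mult.assoc[symmetric] qbinom_qprod_Suc by (simp add: algebra_simps)
    then show ?thesis
      unfolding pw f_def by (simp add: power_add power_mult_distrib power_mult_self algebra_simps)
  qed (simp add: f_def)
  have "(\<Sum>k\<le>Suc n. qbinom q (Suc n) k * qbinom q m k * qprod q q k * a ^ k * q ^ (k * k)
      * qprod (a * q ^ (k + 1)) q (Suc n - k))
    = (\<Sum>k\<le>Suc n. qbinom q (Suc n) k * f a k * qprod (a * q ^ (k + 1)) q (Suc n - k))"
    by (simp add: f_def mult.assoc del: sum.atMost_Suc)
  also have "\<dots> = (1 - a * q ^ (m + 1)) * (\<Sum>k\<le>n. qbinom q n k * f (a * q) k * qprod (a * q * q ^ (k + 1)) q (n - k))"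
    unfolding sum_qbinom_qprod_Suc step by (simp add: sum_distrib_left power_add mult_ac)
  also have "\<dots> = qprod (a * q ^ (m + 1)) q (Suc n)"
    using Suc.IH[of "a * q"] by (simp add: f_def qprod_Suc_shift mult_ac)
  finally show ?case .
qed

definition qvandermonde_sum :: "'a::comm_ring_1 \<Rightarrow> nat \<Rightarrow> nat \<Rightarrow> 'a \<Rightarrow> 'a" where
  "qvandermonde_sum q n m a =
     (\<Sum>k\<le>n. q ^ ((n - k) * (m - k)) * qbinom q n k * qbinom q m k * qprod q q k * qprod (a * q ^ (k + 1)) q (m - k))"

lemma qvandermonde_sum_Suc:
  "qvandermonde_sum q (Suc n) (Suc m) a
     = q ^ Suc m * qvandermonde_sum q n (Suc m) a + (1 - q ^ Suc m) * qvandermonde_sum q n m (a * q)"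
proof -
  define g where "g k = q ^ ((Suc n - k) * (Suc m - k)) * qbinom q (Suc m) k * qprod q q k
      * qprod (a * q ^ (k + 1)) q (Suc m - k)" for k
  have "q ^ k * qbinom q n k * g k
      = q ^ Suc m * (q ^ ((n - k) * (Suc m - k)) * qbinom q n k * qbinom q (Suc m) k * qprod q q k
        * qprod (a * q ^ (k + 1)) q (Suc m - k))" if "k \<le> n" for k
  proof (cases "k \<le> Suc m")
    case True
    with that obtain d e where "n = k + d" "Suc m = k + e"
      by (metis le_Suc_ex)
    then have "k + (Suc n - k) * (Suc m - k) = Suc m + (n - k) * (Suc m - k)"
      by (simp add: algebra_simps)
    then have pw: "q ^ k * q ^ ((Suc n - k) * (Suc m - k)) = q ^ Suc m * q ^ ((n - k) * (Suc m - k))"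
      by (metis power_add)
    have "q ^ k * qbinom q n k * g k = (q ^ k * q ^ ((Suc n - k) * (Suc m - k))) * qbinom q n k
        * qbinom q (Suc m) k * qprod q q k * qprod (a * q ^ (k + 1)) q (Suc m - k)"
      unfolding g_def by (simp add: mult_ac)
    then show ?thesis
      unfolding pw by (simp add: mult_ac)
  qed (simp add: g_def)
  moreover have "qbinom q n k * g (Suc k)
      = (1 - q ^ Suc m) * (q ^ ((n - k) * (m - k)) * qbinom q n k * qbinom q m k * qprod q q k
        * qprod (a * q * q ^ (k + 1)) q (m - k))" for k
  proof -
    have "qbinom q n k * g (Suc k) = q ^ ((n - k) * (m - k)) * qbinom q n k
        * (qbinom q (Suc m) (Suc k) * qprod q q (Suc k)) * qprod (a * q * q ^ (k + 1)) q (m - k)"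
      unfolding g_def by (simp add: mult_ac)
    also have "\<dots> = q ^ ((n - k) * (m - k)) * qbinom q n k
        * (qprod q q k * (qbinom q (Suc m) k * (1 - q ^ (Suc m - k)))) * qprod (a * q * q ^ (k + 1)) q (m - k)"
      unfolding qbinom_qprod_Suc by (simp add: mult_ac)
    finally show ?thesis
      unfolding qbinom_Suc_left_ratio by (simp add: mult_ac)
  qed
  moreover have "qvandermonde_sum q (Suc n) (Suc m) a = (\<Sum>k\<le>Suc n. qbinom q (Suc n) k * g k)"
    by (simp add: qvandermonde_sum_def g_def mult_ac del: sum.atMost_Suc)
  ultimately show ?thesis
    unfolding sum_qbinom_Suc by (simp add: qvandermonde_sum_def sum_distrib_left add.commute)
qed

lemma qvandermonde_sum_eq: "qvandermonde_sum q n m a = qprod (a * q ^ (n + 1)) q m"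
proof (induction n arbitrary: a m)
  case 0 then show ?case by (simp add: qvandermonde_sum_def)
next
  case (Suc n)
  show ?case
  proof (cases m)
    case 0 then show ?thesis by (simp add: qvandermonde_sum_def sum.atMost_Suc_shift del: sum.atMost_Suc)
  next
    case (Suc m')
    have "qprod (a * q ^ (n + 1)) q (Suc m') = (1 - a * q ^ (n + 1)) * qprod (a * q * q ^ (n + 1)) q m'"
      unfolding qprod_Suc_shift by (simp add: mult_ac)
    moreover have "qprod (a * q ^ (Suc n + 1)) q (Suc m')
        = qprod (a * q * q ^ (n + 1)) q m' * (1 - a * q ^ (Suc n + 1) * q ^ m')"
      unfolding qprod_Suc by (simp add: mult_ac)
    ultimately show ?thesis
      unfolding Suc qvandermonde_sum_Suc Suc.IH by (simp only:) (simp add: power_add algebra_simps)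
  qed
qed

text \<open>For \<open>a = 1\<close> this is the Gaussian binomial coefficient \<open>[r + s, r]\<close>.\<close>

definition deformed_qbinom :: "'a::field \<Rightarrow> 'a \<Rightarrow> nat \<Rightarrow> nat \<Rightarrow> 'a" where
  "deformed_qbinom a q r s = qprod (a * q) q (r + s) / (qprod (a * q) q r * qprod (a * q) q s)"

lemma qprod_tail_div:
  fixes a q :: "'a::field"
  assumes "qprod (a * q) q n \<noteq> 0" "k \<le> n"
  shows "qprod (a * q ^ (k + 1)) q (n - k) / qprod (a * q) q n = 1 / qprod (a * q) q k"
proof -
  have "qprod (a * q) q n = qprod (a * q) q k * qprod (a * q ^ (k + 1)) q (n - k)"
    using qprod_add[of "a * q" q k "n - k"] assms(2) by (simp add: mult_ac)
  then show ?thesis using assms(1) by auto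
qed

lemma deformed_qbinom_eq_sum:
  fixes a q :: "'a::field"
  assumes "qprod (a * q) q (r + s) \<noteq> 0"
  shows "deformed_qbinom a q r s
    = (\<Sum>k\<le>r. q ^ ((r - k) * (s - k)) * qbinom q r k * qbinom q s k * qprod q q k / qprod (a * q) q k)"
proof -
  have r: "qprod (a * q) q r \<noteq> 0" and s: "qprod (a * q) q s \<noteq> 0"
    using qprod_nonzero_mono[OF assms] by simp_all
  have "qprod (a * q) q (r + s) = qprod (a * q) q r * qprod (a * q ^ (r + 1)) q s"
    using qprod_add[of "a * q" q r s] by (simp add: mult_ac)
  then have "deformed_qbinom a q r s = qprod (a * q ^ (r + 1)) q s / qprod (a * q) q s"
    unfolding deformed_qbinom_def by (simp only: nonzero_mult_divide_mult_cancel_left[OF r])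
  also have "\<dots> = (\<Sum>k\<le>r. q ^ ((r - k) * (s - k)) * qbinom q r k * qbinom q s k * qprod q q k
      * (qprod (a * q ^ (k + 1)) q (s - k) / qprod (a * q) q s))"
    unfolding qvandermonde_sum_eq[of q r s a, symmetric] qvandermonde_sum_def sum_divide_distrib
    by (simp add: mult.assoc)
  also have "\<dots> = (\<Sum>k\<le>r. q ^ ((r - k) * (s - k)) * qbinom q r k * qbinom q s k * qprod q q k / qprod (a * q) q k)"
  proof (rule sum.cong[OF refl])
    fix k assume "k \<in> {..r}"
    show "q ^ ((r - k) * (s - k)) * qbinom q r k * qbinom q s k * qprod q q k
        * (qprod (a * q ^ (k + 1)) q (s - k) / qprod (a * q) q s)
      = q ^ ((r - k) * (s - k)) * qbinom q r k * qbinom q s k * qprod q q k / qprod (a * q) q k"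
    proof (cases "k \<le> s")
      case True
      then show ?thesis by (simp only: qprod_tail_div[OF s True]) simp
    qed simp
  qed
  finally show ?thesis .
qed

lemma sum_power_eq_deformed_qbinom:
  fixes a q :: "'a::field"
  assumes "qprod (a * q) q (n + m) \<noteq> 0"
  shows "(\<Sum>k\<le>n. qbinom q n k * qbinom q m k * qprod q q k * a ^ k * q ^ (k * k) / qprod (a * q) q k)
    = deformed_qbinom a q n m"
proof -
  have n: "qprod (a * q) q n \<noteq> 0" and m: "qprod (a * q) q m \<noteq> 0"
    using qprod_nonzero_mono[OF assms] by simp_all
  have "qprod (a * q) q (n + m) = qprod (a * q) q m * qprod (a * q ^ (m + 1)) q n"
    using qprod_add[of "a * q" q m n] by (simp add: add.commute mult_ac)
  then have "deformed_qbinom a q n m = qprod (a * q ^ (m + 1)) q n / qprod (a * q) q n"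
    unfolding deformed_qbinom_def
    by (simp only: mult.commute[of "qprod (a * q) q n"] nonzero_mult_divide_mult_cancel_left[OF m])
  also have "\<dots> = (\<Sum>k\<le>n. qbinom q n k * qbinom q m k * qprod q q k * a ^ k * q ^ (k * k)
      * (qprod (a * q ^ (k + 1)) q (n - k) / qprod (a * q) q n))"
    unfolding qprod_shift_power_expansion[of q n m a, symmetric] sum_divide_distrib by (simp add: mult.assoc)
  also have "\<dots> = (\<Sum>k\<le>n. qbinom q n k * qbinom q m k * qprod q q k * a ^ k * q ^ (k * k) / qprod (a * q) q k)"
  proof (rule sum.cong[OF refl])
    fix k assume "k \<in> {..n}"
    then show "qbinom q n k * qbinom q m k * qprod q q k * a ^ k * q ^ (k * k)
        * (qprod (a * q ^ (k + 1)) q (n - k) / qprod (a * q) q n)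
      = qbinom q n k * qbinom q m k * qprod q q k * a ^ k * q ^ (k * k) / qprod (a * q) q k"
      by (simp only: qprod_tail_div[OF n] atMost_iff) simp
  qed
  finally show ?thesis ..
qed

lemma mult_le_sum_squares: "(r::nat) * s \<le> r\<^sup>2 + s\<^sup>2"
  by (cases "r \<le> s") (simp_all add: power2_eq_square add_increasing mult_le_mono trans_le_add1)

lemma exponent_split:
  fixes k r s :: nat
  assumes "k \<le> r" "k \<le> s"
  shows "r\<^sup>2 + s\<^sup>2 - r * s + (r - k) * (s - k) = k * k + r * (r - k) + s * (s - k)"
proof -
  obtain d e where "r = k + d" "s = k + e"
    using assms le_Suc_ex by blast
  then have "r\<^sup>2 + s\<^sup>2 + (r - k) * (s - k) = r * s + (k * k + r * (r - k) + s * (s - k))"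
    by (simp add: algebra_simps power2_eq_square)
  then show ?thesis using mult_le_sum_squares[of r s] by linarith
qed

lemma deformed_qbinom_double_sum:
  fixes x y q :: "'a::field"
  assumes q: "q \<noteq> 0" and nonzero: "qprod (x * y * q) q (n + m) \<noteq> 0"
  shows "(\<Sum>r\<le>n. \<Sum>s\<le>m. qbinom q n r * qbinom q m s * x ^ r * y ^ s * q ^ (r\<^sup>2 + s\<^sup>2 - r * s)
      * qprod (x * q ^ (r + 1)) q (n - r) * qprod (y * q ^ (s + 1)) q (m - s) * deformed_qbinom (x * y) q r s)
    = deformed_qbinom (x * y) q n m"
proof -
  define M where "M r s = qbinom q n r * qbinom q m s * x ^ r * y ^ s * q ^ (r\<^sup>2 + s\<^sup>2 - r * s)
      * qprod (x * q ^ (r + 1)) q (n - r) * qprod (y * q ^ (s + 1)) q (m - s)" for r s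
  define f where "f r s k = q ^ ((r - k) * (s - k)) * qbinom q r k * qbinom q s k * qprod q q k
      / qprod (x * y * q) q k" for r s k
  define X where "X n k x r = qbinom q n r * qbinom q r k * x ^ r * q ^ (r * (r - k))
      * qprod (x * q ^ (r + 1)) q (n - r)" for n k x r
  have X_sum: "(\<Sum>r\<le>N. X N k z r) = qbinom q N k * z ^ k" for N k z
    unfolding X_def qbinom_chain_sum_def[symmetric] by (rule qbinom_chain_sum_eq[OF q])
  define c where "c k = qprod q q k / qprod (x * y * q) q k * q ^ (k * k)" for k
  have expand: "deformed_qbinom (x * y) q r s = (\<Sum>k\<le>n. f r s k)" if "r \<le> n" "s \<le> m" for r s
  proof -
    have "qprod (x * y * q) q (r + s) \<noteq> 0"
      using qprod_nonzero_mono[OF nonzero] that by simp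
    then have "deformed_qbinom (x * y) q r s = (\<Sum>k\<le>r. f r s k)"
      unfolding f_def by (simp add: deformed_qbinom_eq_sum)
    also have "\<dots> = (\<Sum>k\<le>n. f r s k)"
      by (rule sum.mono_neutral_left) (use that in \<open>auto simp: f_def\<close>)
    finally show ?thesis .
  qed
  have separate: "M r s * f r s k = c k * (X n k x r * X m k y s)" for r s k
  proof (cases "k \<le> r \<and> k \<le> s")
    case True
    then have "q ^ (r\<^sup>2 + s\<^sup>2 - r * s) * q ^ ((r - k) * (s - k))
        = q ^ (k * k) * q ^ (r * (r - k)) * q ^ (s * (s - k))"
      by (simp add: exponent_split flip: power_add)
    then show ?thesis
      unfolding M_def f_def c_def X_def by (simp add: mult_ac)
  qed (auto simp: f_def X_def)
  have "(\<Sum>r\<le>n. \<Sum>s\<le>m. M r s * deformed_qbinom (x * y) q r s) = (\<Sum>r\<le>n. \<Sum>s\<le>m. \<Sum>k\<le>n. M r s * f r s k)"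
    by (intro sum.cong refl) (simp add: expand sum_distrib_left)
  also have "\<dots> = (\<Sum>r\<le>n. \<Sum>k\<le>n. \<Sum>s\<le>m. M r s * f r s k)"
    by (intro sum.cong refl sum.swap)
  also have "\<dots> = (\<Sum>k\<le>n. \<Sum>r\<le>n. \<Sum>s\<le>m. M r s * f r s k)"
    by (rule sum.swap)
  also have "\<dots> = (\<Sum>k\<le>n. c k * ((\<Sum>r\<le>n. X n k x r) * (\<Sum>s\<le>m. X m k y s)))"
    unfolding separate sum_product by (simp only: sum_distrib_left)
  also have "\<dots> = (\<Sum>k\<le>n. qbinom q n k * qbinom q m k * qprod q q k * (x * y) ^ k * q ^ (k * k)
      / qprod (x * y * q) q k)"
    by (simp add: X_sum c_def power_mult_distrib mult_ac)
  also have "\<dots> = deformed_qbinom (x * y) q n m"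
    using sum_power_eq_deformed_qbinom[of "x * y" q n m] nonzero by simp
  finally show ?thesis
    unfolding M_def by (simp add: mult_ac)
qed

section \<open>The summation identity for \<open>Phi\<close>\<close>

lemma Phi_of_nat:
  "Phi (int n) (int m) x y q = qprod (x * y * q) q (n + m) /
     (qprod q q n * qprod (x * q) q n * qprod (x * y * q) q n * qprod q q m * qprod (y * q) q m * qprod (x * y * q) q m)"
  unfolding Phi_def of_nat_add[symmetric] qpoch_of_nat by simp

lemma Kc_eq_qprod:
  "r \<le> n \<Longrightarrow> s \<le> m \<Longrightarrow>
   Kc n m r s x y q = x ^ r * y ^ s * q ^ (r\<^sup>2 + s\<^sup>2 - r * s) / (qprod q q (n - r) * qprod q q (m - s))"
  unfolding Kc_def of_nat_diff[symmetric] qpoch_of_nat ..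

lemma qbinom_eq_qprod_div:
  fixes q :: "'a::field"
  assumes "qprod q q n \<noteq> 0" "k \<le> n"
  shows "qbinom q n k = qprod q q n / (qprod q q k * qprod q q (n - k))"
proof -
  have "qprod q q k \<noteq> 0" "qprod q q (n - k) \<noteq> 0"
    using qprod_nonzero_mono[OF assms(1)] assms(2) by auto
  then show ?thesis using qbinom_mult_qprod[OF assms(2), of q] by (simp add: field_simps)
qed

lemma qprod_shift_div:
  fixes x q :: "'a::field"
  assumes "qprod (x * q) q n \<noteq> 0" "k \<le> n"
  shows "qprod (x * q ^ (k + 1)) q (n - k) = qprod (x * q) q n / qprod (x * q) q k"
  using qprod_tail_div[OF assms] qprod_nonzero_mono[OF assms] by (simp add: field_simps)

lemma sum_Kc_Phi:
  assumes q: "q \<noteq> 0"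
    and nonzero: "qprod q q n \<noteq> 0" "qprod q q m \<noteq> 0" "qprod (x * q) q n \<noteq> 0" "qprod (y * q) q m \<noteq> 0"
      "qprod (x * y * q) q (n + m) \<noteq> 0"
  shows "(\<Sum>r\<le>n. \<Sum>s\<le>m. Kc n m r s x y q * Phi (int r) (int s) x y q) = Phi (int n) (int m) x y q"
proof -
  define C where "C = qprod q q n * qprod q q m * qprod (x * q) q n * qprod (y * q) q m"
  define T where "T r s = qbinom q n r * qbinom q m s * x ^ r * y ^ s * q ^ (r\<^sup>2 + s\<^sup>2 - r * s)
      * qprod (x * q ^ (r + 1)) q (n - r) * qprod (y * q ^ (s + 1)) q (m - s) * deformed_qbinom (x * y) q r s"
    for r s
  have summand: "Kc n m r s x y q * Phi (int r) (int s) x y q = T r s / C" if "r \<le> n" "s \<le> m" for r s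
  proof -
    have "qprod q q r \<noteq> 0" "qprod q q (n - r) \<noteq> 0" "qprod q q s \<noteq> 0" "qprod q q (m - s) \<noteq> 0"
      "qprod (x * q) q r \<noteq> 0" "qprod (y * q) q s \<noteq> 0"
      "qprod (x * y * q) q r \<noteq> 0" "qprod (x * y * q) q s \<noteq> 0"
      using qprod_nonzero_mono[OF nonzero(1)] qprod_nonzero_mono[OF nonzero(2)]
        qprod_nonzero_mono[OF nonzero(3)] qprod_nonzero_mono[OF nonzero(4)]
        qprod_nonzero_mono[OF nonzero(5)] that by auto
    then show ?thesis
      unfolding Kc_eq_qprod[OF that] Phi_of_nat T_def C_def deformed_qbinom_def
        qbinom_eq_qprod_div[OF nonzero(1) that(1)] qbinom_eq_qprod_div[OF nonzero(2) that(2)]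
        qprod_shift_div[OF nonzero(3) that(1)] qprod_shift_div[OF nonzero(4) that(2)]
      using nonzero by (simp add: field_simps)
  qed
  have "(\<Sum>r\<le>n. \<Sum>s\<le>m. Kc n m r s x y q * Phi (int r) (int s) x y q) = (\<Sum>r\<le>n. \<Sum>s\<le>m. T r s) / C"
    by (simp add: summand sum_divide_distrib)
  also have "\<dots> = deformed_qbinom (x * y) q n m / C"
    unfolding T_def using deformed_qbinom_double_sum[OF q nonzero(5)] by simp
  also have "\<dots> = Phi (int n) (int m) x y q"
  proof -
    have "qprod (x * y * q) q n \<noteq> 0" "qprod (x * y * q) q m \<noteq> 0"
      using qprod_nonzero_mono[OF nonzero(5)] by auto
    then show ?thesis
      unfolding Phi_of_nat deformed_qbinom_def C_def using nonzero by (simp add: field_simps)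
  qed
  finally show ?thesis .
qed

section \<open>Contiguous relations\<close>

definition nondegenerate :: "nat \<Rightarrow> complex \<Rightarrow> complex \<Rightarrow> complex \<Rightarrow> bool" where
  "nondegenerate N z w q \<longleftrightarrow>
     (\<forall>k\<le>N. q ^ (k + 1) \<noteq> 1 \<and> z * q ^ k \<noteq> 1 \<and> w * q ^ k \<noteq> 1 \<and> z * w * q ^ k \<noteq> 1)"

lemma nondegenerate_mono: "nondegenerate N z w q \<Longrightarrow> M \<le> N \<Longrightarrow> nondegenerate M z w q"
  by (simp add: nondegenerate_def)

lemma nondegenerate_qprod_nonzero:
  assumes "nondegenerate N z w q"
  shows "j \<le> N + 1 \<Longrightarrow> qprod q q j \<noteq> 0"
    and "e + j \<le> N + 1 \<Longrightarrow> qprod (z * q ^ e) q j \<noteq> 0"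
    and "e + j \<le> N + 1 \<Longrightarrow> qprod (w * q ^ e) q j \<noteq> 0"
    and "e + j \<le> N + 1 \<Longrightarrow> qprod (z * w * q ^ e) q j \<noteq> 0"
  using assms by (auto simp: nondegenerate_def mult.assoc mult.commute[of q] intro!: qprod_nonzeroI
      simp flip: power_add power_Suc)

lemma divide_mult_eq_divide_mult:
  fixes a b c d p p' :: "'a::field"
  assumes "b \<noteq> 0" "d \<noteq> 0" "a * p * d = c * p' * b"
  shows "a / b * p = c / d * p'"
  using assms by (simp add: field_simps)

lemma Phi_contiguous_z:
  assumes "q \<noteq> 0" "nondegenerate (n + m + 1) z w q"
  shows "Phi (int n) (int m) (z / q) w q * ((1 - z) * (1 - z * w) * (1 - z * w * q ^ (n + m)))
    = Phi (int n) (int m) z w q * ((1 - z * q ^ n) * (1 - z * w * q ^ n) * (1 - z * w * q ^ m))"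
proof -
  have nz: "qprod q q n \<noteq> 0" "qprod z q n \<noteq> 0" "qprod (z * w) q n \<noteq> 0" "qprod q q m \<noteq> 0"
    "qprod (w * q) q m \<noteq> 0" "qprod (z * w) q m \<noteq> 0" "qprod (z * q) q n \<noteq> 0" "qprod (z * w * q) q n \<noteq> 0"
    "qprod (z * w * q) q m \<noteq> 0"
    using nondegenerate_qprod_nonzero(1)[OF assms(2), of n] nondegenerate_qprod_nonzero(1)[OF assms(2), of m]
      nondegenerate_qprod_nonzero(2)[OF assms(2), of 0 n] nondegenerate_qprod_nonzero(2)[OF assms(2), of 1 n]
      nondegenerate_qprod_nonzero(3)[OF assms(2), of 1 m]
      nondegenerate_qprod_nonzero(4)[OF assms(2), of 0 n] nondegenerate_qprod_nonzero(4)[OF assms(2), of 0 m]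
      nondegenerate_qprod_nonzero(4)[OF assms(2), of 1 n] nondegenerate_qprod_nonzero(4)[OF assms(2), of 1 m]
    by simp_all
  have e: "z / q * w * q = z * w" "z / q * q = z"
    using assms(1) by simp_all
  \<comment> \<open>Naming the powers makes \<open>algebra\<close> treat them as atoms; it fails on \<open>q ^ n\<close> itself.\<close>
  define N where "N = q ^ n"
  define M where "M = q ^ m"
  have ids: "qprod (z * w) q (n + m) * (1 - z * w * (N * M)) = (1 - z * w) * qprod (z * w * q) q (n + m)"
    "qprod z q n * (1 - z * N) = (1 - z) * qprod (z * q) q n"
    "qprod (z * w) q n * (1 - z * w * N) = (1 - z * w) * qprod (z * w * q) q n"
    "qprod (z * w) q m * (1 - z * w * M) = (1 - z * w) * qprod (z * w * q) q m"
    unfolding N_def M_def power_add[symmetric] by (rule qprod_Suc_shift_eq)+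
  show ?thesis
    unfolding Phi_of_nat e power_add N_def[symmetric] M_def[symmetric]
    by (rule divide_mult_eq_divide_mult; (simp only: nz mult_eq_0_iff de_Morgan_disj simp_thms)?) (use ids in algebra)
qed

lemma Phi_contiguous_pred_n:
  assumes "q \<noteq> 0" "nondegenerate (n + m + 1) z w q"
  shows "z / qpoch z q 2 * Phi (int n - 1) (int m) (z * q) (w / q) q * ((1 - z) * (1 - w) * (1 - z * w * q ^ (n + m)))
    = Phi (int n) (int m) z w q * (z * (1 - q ^ n) * (1 - z * w * q ^ n) * (1 - w * q ^ m))"
proof (cases n)
  case 0
  then show ?thesis by (simp add: Phi_def)
next
  case (Suc a)
  have e: "int n - 1 = int a" "z * q * (w / q) * q = z * w * q" "w / q * q = w"
    using Suc assms(1) by simp_all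
  have nz: "qprod q q a \<noteq> 0" "qprod (z * q * q) q a \<noteq> 0" "qprod (z * w * q) q a \<noteq> 0"
    "qprod q q m \<noteq> 0" "qprod w q m \<noteq> 0" "qprod (z * w * q) q m \<noteq> 0"
    "qprod q q n \<noteq> 0" "qprod (z * q) q n \<noteq> 0" "qprod (z * w * q) q n \<noteq> 0" "qprod (w * q) q m \<noteq> 0"
    "1 - z \<noteq> 0" "1 - z * q \<noteq> 0"
    using nondegenerate_qprod_nonzero(1)[OF assms(2), of a] nondegenerate_qprod_nonzero(1)[OF assms(2), of m]
      nondegenerate_qprod_nonzero(2)[OF assms(2), of 2 a] nondegenerate_qprod_nonzero(3)[OF assms(2), of 0 m]
      nondegenerate_qprod_nonzero(4)[OF assms(2), of 1 a] nondegenerate_qprod_nonzero(4)[OF assms(2), of 1 m]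
      nondegenerate_qprod_nonzero(1)[OF assms(2), of n] nondegenerate_qprod_nonzero(2)[OF assms(2), of 1 n]
      nondegenerate_qprod_nonzero(4)[OF assms(2), of 1 n] nondegenerate_qprod_nonzero(3)[OF assms(2), of 1 m]
      assms(2)[unfolded nondegenerate_def, rule_format, of 0] assms(2)[unfolded nondegenerate_def, rule_format, of 1]
    unfolding Suc by (simp_all add: power2_eq_square mult_ac)
  define N where "N = q ^ n"
  define M where "M = q ^ m"
  have ids: "qprod (z * w * q) q (n + m) = qprod (z * w * q) q (a + m) * (1 - z * w * (N * M))"
    "qprod q q n = qprod q q a * (1 - N)"
    "qprod (z * w * q) q n = qprod (z * w * q) q a * (1 - z * w * N)"
    unfolding N_def M_def Suc by (simp_all add: qprod_Suc power_add mult_ac)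
  have ids': "qprod (z * q) q n = (1 - z * q) * qprod (z * q * q) q a"
    "qprod w q m * (1 - w * M) = (1 - w) * qprod (w * q) q m"
    unfolding N_def M_def Suc by (rule qprod_Suc_shift qprod_Suc_shift_eq)+
  show ?thesis
    unfolding Phi_of_nat qpoch_2 e times_divide_times_eq power_add N_def[symmetric] M_def[symmetric]
    by (rule divide_mult_eq_divide_mult; (simp only: nz mult_eq_0_iff de_Morgan_disj simp_thms)?) (use ids ids' in algebra)
qed

lemma Phi_contiguous_pred_both:
  assumes "q \<noteq> 0" "nondegenerate (n + m + 1) z w q"
  shows "z * w\<^sup>2 / (qpoch w q 2 * qpoch (z * w) q 2) * Phi (int n - 1) (int m - 1) z (w * q) q
      * ((1 - w) * (1 - z * w) * (1 - z * w * q ^ (n + m)))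
    = Phi (int n) (int m) z w q * (z * w\<^sup>2 * (1 - q ^ n) * (1 - z * q ^ n) * (1 - q ^ m))"
proof (cases "n = 0 \<or> m = 0")
  case True
  then show ?thesis by (auto simp: Phi_def)
next
  case False
  then obtain a b where n: "n = Suc a" and m: "m = Suc b"
    by (metis not0_implies_Suc)
  have e: "int n - 1 = int a" "int m - 1 = int b" "z * (w * q) * q = z * w * q * q"
    unfolding n m by (simp_all add: mult_ac)
  have nz: "qprod q q a \<noteq> 0" "qprod (z * q) q a \<noteq> 0" "qprod (z * w * q * q) q a \<noteq> 0"
    "qprod q q b \<noteq> 0" "qprod (w * q * q) q b \<noteq> 0" "qprod (z * w * q * q) q b \<noteq> 0"
    "qprod q q n \<noteq> 0" "qprod (z * q) q n \<noteq> 0" "qprod (z * w * q) q n \<noteq> 0"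
    "qprod q q m \<noteq> 0" "qprod (w * q) q m \<noteq> 0" "qprod (z * w * q) q m \<noteq> 0"
    "1 - w \<noteq> 0" "1 - w * q \<noteq> 0" "1 - z * w \<noteq> 0" "1 - z * w * q \<noteq> 0"
    using nondegenerate_qprod_nonzero(1)[OF assms(2), of a] nondegenerate_qprod_nonzero(1)[OF assms(2), of b]
      nondegenerate_qprod_nonzero(2)[OF assms(2), of 1 a] nondegenerate_qprod_nonzero(3)[OF assms(2), of 2 b]
      nondegenerate_qprod_nonzero(4)[OF assms(2), of 2 a] nondegenerate_qprod_nonzero(4)[OF assms(2), of 2 b]
      nondegenerate_qprod_nonzero(1)[OF assms(2), of n] nondegenerate_qprod_nonzero(1)[OF assms(2), of m]
      nondegenerate_qprod_nonzero(2)[OF assms(2), of 1 n] nondegenerate_qprod_nonzero(3)[OF assms(2), of 1 m]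
      nondegenerate_qprod_nonzero(4)[OF assms(2), of 1 n] nondegenerate_qprod_nonzero(4)[OF assms(2), of 1 m]
      assms(2)[unfolded nondegenerate_def, rule_format, of 0] assms(2)[unfolded nondegenerate_def, rule_format, of 1]
    unfolding n m by (simp_all add: power2_eq_square mult_ac)
  define N where "N = q ^ n"
  define M where "M = q ^ m"
  have ids: "qprod (z * w * q) q (n + m) = (1 - z * w * q) * (qprod (z * w * q * q) q (a + b) * (1 - z * w * (N * M)))"
    using qprod_Suc_shift[of "z * w * q" q "Suc (a + b)"] qprod_Suc[of "z * w * q * q" q "a + b"]
    unfolding N_def M_def n m by (simp add: power_add mult_ac)
  have ids': "qprod q q n = qprod q q a * (1 - N)" "qprod (z * q) q n = qprod (z * q) q a * (1 - z * N)"
    "qprod q q m = qprod q q b * (1 - M)"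
    unfolding N_def M_def n m by (simp_all add: qprod_Suc mult_ac)
  have ids'': "qprod (z * w * q) q n = (1 - z * w * q) * qprod (z * w * q * q) q a"
    "qprod (w * q) q m = (1 - w * q) * qprod (w * q * q) q b"
    "qprod (z * w * q) q m = (1 - z * w * q) * qprod (z * w * q * q) q b"
    unfolding n m by (rule qprod_Suc_shift)+
  show ?thesis
    unfolding Phi_of_nat qpoch_2 e times_divide_times_eq power_add N_def[symmetric] M_def[symmetric]
    by (rule divide_mult_eq_divide_mult; (simp only: nz mult_eq_0_iff de_Morgan_disj simp_thms)?) (use ids ids' ids'' in algebra)
qed

lemma contiguous_coefficient_identity:
  fixes z w N M :: "'a::field"
  assumes "(1 - z) * (1 - w) * (1 - z * w) * (1 - z * w * (N * M)) \<noteq> 0"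
  shows "(1 - z * N) * (1 - z * w * N) * (1 - z * w * M) / ((1 - z) * (1 - z * w) * (1 - z * w * (N * M)))
    - z * (1 - N) * (1 - z * w * N) * (1 - w * M) / ((1 - z) * (1 - w) * (1 - z * w * (N * M)))
    + z * w\<^sup>2 * (1 - N) * (1 - z * N) * (1 - M) / ((1 - w) * (1 - z * w) * (1 - z * w * (N * M))) = 1"
    (is "?X1 / (?a * ?c * ?e) - ?X2 / (?a * ?b * ?e) + ?X3 / (?b * ?c * ?e) = 1")
proof -
  have "x1 / (a * c * e) - x2 / (a * b * e) + x3 / (b * c * e) = (x1 * b - x2 * c + x3 * a) / (a * b * c * e)"
    if "a * b * c * e \<noteq> 0" for x1 x2 x3 a b c e :: 'a
    using that by (simp add: field_simps)
  moreover have "?X1 * ?b - ?X2 * ?c + ?X3 * ?a = ?a * ?b * ?c * ?e"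
    by algebra
  ultimately show ?thesis
    using assms by simp
qed

lemma Phi4_one_one:
  assumes q: "q \<noteq> 0" and nd: "nondegenerate (n + m + 1) z w q"
  shows "Phi4 (int n) (int m) 1 1 z w q = Phi (int n) (int m) z w q"
proof -
  define P where "P = Phi (int n) (int m) z w q"
  define N where "N = q ^ n"
  define M where "M = q ^ m"
  define e where "e = 1 - z * w * (N * M)"
  have nz: "(1 - z) * (1 - w) * (1 - z * w) * e \<noteq> 0"
    using nd[unfolded nondegenerate_def, rule_format, of 0] nd[unfolded nondegenerate_def, rule_format, of "n + m"]
    by (auto simp: e_def N_def M_def power_add)
  have "Phi (int n) (int m) (z / q) w q * ((1 - z) * (1 - z * w) * e)
      = P * ((1 - z * N) * (1 - z * w * N) * (1 - z * w * M))"
    using Phi_contiguous_z[OF q nd] unfolding P_def e_def N_def M_def power_add .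
  then have T1: "Phi (int n) (int m) (z / q) w q
      = P * ((1 - z * N) * (1 - z * w * N) * (1 - z * w * M) / ((1 - z) * (1 - z * w) * e))"
    using nz by (simp only: times_divide_eq_right eq_divide_eq mult_eq_0_iff de_Morgan_disj simp_thms if_True)
  have "z / qpoch z q 2 * Phi (int n - 1) (int m) (z * q) (w / q) q * ((1 - z) * (1 - w) * e)
      = P * (z * (1 - N) * (1 - z * w * N) * (1 - w * M))"
    using Phi_contiguous_pred_n[OF q nd] unfolding P_def e_def N_def M_def power_add .
  then have T2: "z / qpoch z q 2 * Phi (int n - 1) (int m) (z * q) (w / q) q
      = P * (z * (1 - N) * (1 - z * w * N) * (1 - w * M) / ((1 - z) * (1 - w) * e))"
    using nz by (simp only: times_divide_eq_right eq_divide_eq mult_eq_0_iff de_Morgan_disj simp_thms if_True)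
  have "z * w\<^sup>2 / (qpoch w q 2 * qpoch (z * w) q 2) * Phi (int n - 1) (int m - 1) z (w * q) q
      * ((1 - w) * (1 - z * w) * e) = P * (z * w\<^sup>2 * (1 - N) * (1 - z * N) * (1 - M))"
    using Phi_contiguous_pred_both[OF q nd] unfolding P_def e_def N_def M_def power_add .
  then have T3: "z * w\<^sup>2 / (qpoch w q 2 * qpoch (z * w) q 2) * Phi (int n - 1) (int m - 1) z (w * q) q
      = P * (z * w\<^sup>2 * (1 - N) * (1 - z * N) * (1 - M) / ((1 - w) * (1 - z * w) * e))"
    using nz by (simp only: times_divide_eq_right eq_divide_eq mult_eq_0_iff de_Morgan_disj simp_thms if_True)
  have "Phi4 (int n) (int m) 1 1 z w q
      = P * ((1 - z * N) * (1 - z * w * N) * (1 - z * w * M) / ((1 - z) * (1 - z * w) * e)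
        - z * (1 - N) * (1 - z * w * N) * (1 - w * M) / ((1 - z) * (1 - w) * e)
        + z * w\<^sup>2 * (1 - N) * (1 - z * N) * (1 - M) / ((1 - w) * (1 - z * w) * e))"
    unfolding Phi4_def mult_1 T1 T2 T3 by (simp add: algebra_simps)
  also have "\<dots> = P"
    using contiguous_coefficient_identity[of z w N M] nz unfolding e_def by simp
  finally show ?thesis unfolding P_def .
qed

section \<open>Shifting the kernel\<close>

lemma exponent_Suc_left:
  "(Suc r)\<^sup>2 + s\<^sup>2 - Suc r * s + s = r\<^sup>2 + s\<^sup>2 - r * s + r + Suc r"
  using mult_le_sum_squares[of r s] mult_le_sum_squares[of "Suc r" s]
  unfolding power2_eq_square mult_Suc mult_Suc_right by linarith

lemma exponent_Suc_both:
  "(Suc r)\<^sup>2 + (Suc s)\<^sup>2 - Suc r * Suc s = r\<^sup>2 + s\<^sup>2 - r * s + Suc r + s"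
  using mult_le_sum_squares[of r s] by (simp add: power2_eq_square)

lemma Kc_Suc_left:
  assumes "q \<noteq> 0"
  shows "Kc (Suc n) m (Suc r) s (z / q) w q = z * Kc n m r s (z * q) (w / q) q"
proof -
  define e1 where "e1 = (Suc r)\<^sup>2 + s\<^sup>2 - Suc r * s"
  define e0 where "e0 = r\<^sup>2 + s\<^sup>2 - r * s"
  have "q ^ e1 * q ^ s = q ^ e0 * q ^ r * q ^ Suc r"
    unfolding power_add[symmetric] e1_def e0_def exponent_Suc_left ..
  then have "q ^ e1 = q ^ e0 * q ^ r * q ^ Suc r / q ^ s"
    using assms by (simp add: eq_divide_eq)
  then have "(z / q) ^ Suc r * w ^ s * q ^ e1 = z * ((z * q) ^ r * (w / q) ^ s * q ^ e0)"
    using assms by (simp add: field_simps)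
  then show ?thesis
    unfolding Kc_def e1_def[symmetric] e0_def[symmetric] by simp
qed

lemma Kc_Suc_both:
  assumes "q \<noteq> 0"
  shows "Kc (Suc n) (Suc m) (Suc r) (Suc s) (z / q) w q = z * w * Kc n m r s z (w * q) q"
proof -
  define e1 where "e1 = (Suc r)\<^sup>2 + (Suc s)\<^sup>2 - Suc r * Suc s"
  define e0 where "e0 = r\<^sup>2 + s\<^sup>2 - r * s"
  have "q ^ e1 = q ^ e0 * q ^ Suc r * q ^ s"
    unfolding power_add[symmetric] e1_def e0_def exponent_Suc_both ..
  then have "(z / q) ^ Suc r * w ^ Suc s * q ^ e1 = z * w * (z ^ r * (w * q) ^ s * q ^ e0)"
    using assms by (simp add: field_simps)
  then show ?thesis
    unfolding Kc_def e1_def[symmetric] e0_def[symmetric] by simp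
qed

lemma sum_Kc_Phi_shift:
  assumes q: "q \<noteq> 0" and nd: "nondegenerate (n + m + 1) z w q"
  shows "(\<Sum>r\<le>n. \<Sum>s\<le>m. Kc n m r s (z / q) w q * Phi (int r) (int s) (z / q) w q)
    = Phi (int n) (int m) (z / q) w q"
  using nondegenerate_qprod_nonzero(1)[OF nd, of n] nondegenerate_qprod_nonzero(1)[OF nd, of m]
    nondegenerate_qprod_nonzero(2)[OF nd, of 0 n] nondegenerate_qprod_nonzero(3)[OF nd, of 1 m]
    nondegenerate_qprod_nonzero(4)[OF nd, of 0 "n + m"]
  by (intro sum_Kc_Phi) (simp_all add: q)

lemma sum_Kc_Phi_pred_left:
  assumes q: "q \<noteq> 0" and nd: "nondegenerate (n + m + 1) z w q"
  shows "(\<Sum>r\<le>n. \<Sum>s\<le>m. Kc n m r s (z / q) w q * Phi (int r - 1) (int s) (z * q) (w / q) q)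
    = z * Phi (int n - 1) (int m) (z * q) (w / q) q"
proof (cases n)
  case 0
  then show ?thesis by (simp add: Phi_def)
next
  case (Suc n')
  have "(\<Sum>r\<le>n. \<Sum>s\<le>m. Kc n m r s (z / q) w q * Phi (int r - 1) (int s) (z * q) (w / q) q)
      = (\<Sum>r\<le>n'. \<Sum>s\<le>m. z * (Kc n' m r s (z * q) (w / q) q * Phi (int r) (int s) (z * q) (w / q) q))"
    unfolding Suc sum.atMost_Suc_shift by (simp add: Phi_def Kc_Suc_left[OF q] mult.assoc)
  also have "\<dots> = z * Phi (int n') (int m) (z * q) (w / q) q"
    unfolding sum_distrib_left[symmetric]
  proof (rule arg_cong[where f = "(*) z"], rule sum_Kc_Phi[OF q])
    show "qprod q q n' \<noteq> 0" "qprod q q m \<noteq> 0" "qprod (w / q * q) q m \<noteq> 0"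
      using nondegenerate_qprod_nonzero(1)[OF nd, of n'] nondegenerate_qprod_nonzero(1)[OF nd, of m]
        nondegenerate_qprod_nonzero(3)[OF nd, of 0 m] q Suc by simp_all
    show "qprod (z * q * q) q n' \<noteq> 0" "qprod (z * q * (w / q) * q) q (n' + m) \<noteq> 0"
      using nondegenerate_qprod_nonzero(2)[OF nd, of 2 n'] nondegenerate_qprod_nonzero(4)[OF nd, of 1 "n' + m"] q Suc
      by (simp_all add: power2_eq_square mult.assoc)
  qed
  finally show ?thesis using Suc by simp
qed

lemma sum_Kc_Phi_pred_both:
  assumes q: "q \<noteq> 0" and nd: "nondegenerate (n + m + 1) z w q"
  shows "(\<Sum>r\<le>n. \<Sum>s\<le>m. Kc n m r s (z / q) w q * Phi (int r - 1) (int s - 1) z (w * q) q)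
    = z * w * Phi (int n - 1) (int m - 1) z (w * q) q"
proof (cases "n = 0 \<or> m = 0")
  case True
  then have "Phi (int r - 1) (int s - 1) z (w * q) q = 0" if "r \<le> n" "s \<le> m" for r s
    using that by (auto simp: Phi_def)
  then show ?thesis using True by (auto simp: Phi_def)
next
  case False
  then obtain n' m' where nm: "n = Suc n'" "m = Suc m'"
    by (metis not0_implies_Suc)
  have "(\<Sum>r\<le>n. \<Sum>s\<le>m. Kc n m r s (z / q) w q * Phi (int r - 1) (int s - 1) z (w * q) q)
      = (\<Sum>r\<le>n'. \<Sum>s\<le>m'. z * w * (Kc n' m' r s z (w * q) q * Phi (int r) (int s) z (w * q) q))"
    unfolding nm sum.atMost_Suc_shift by (simp add: Phi_def Kc_Suc_both[OF q] mult.assoc)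
  also have "\<dots> = z * w * Phi (int n') (int m') z (w * q) q"
    unfolding sum_distrib_left[symmetric]
  proof (rule arg_cong[where f = "(*) (z * w)"], rule sum_Kc_Phi[OF q])
    show "qprod q q n' \<noteq> 0" "qprod q q m' \<noteq> 0" "qprod (z * q) q n' \<noteq> 0"
      using nondegenerate_qprod_nonzero(1)[OF nd, of n'] nondegenerate_qprod_nonzero(1)[OF nd, of m']
        nondegenerate_qprod_nonzero(2)[OF nd, of 1 n'] nm by simp_all
    show "qprod (w * q * q) q m' \<noteq> 0" "qprod (z * (w * q) * q) q (n' + m') \<noteq> 0"
      using nondegenerate_qprod_nonzero(3)[OF nd, of 2 m'] nondegenerate_qprod_nonzero(4)[OF nd, of 2 "n' + m'"] nm
      by (simp_all add: power2_eq_square mult.assoc)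
  qed
  finally show ?thesis using nm by simp
qed

lemma sum_Kc_Phi4_one_one:
  assumes q: "q \<noteq> 0" and nd: "nondegenerate (n + m + 1) z w q"
  shows "(\<Sum>r\<le>n. \<Sum>s\<le>m. Kc n m r s z w q * Phi4 (int r) (int s) 1 1 z w q) = Phi4 (int n) (int m) 1 1 z w q"
proof -
  have "nondegenerate (r + s + 1) z w q" if "r \<le> n" "s \<le> m" for r s
    using nondegenerate_mono[OF nd] that by simp
  then have "(\<Sum>r\<le>n. \<Sum>s\<le>m. Kc n m r s z w q * Phi4 (int r) (int s) 1 1 z w q)
      = (\<Sum>r\<le>n. \<Sum>s\<le>m. Kc n m r s z w q * Phi (int r) (int s) z w q)"
    by (simp add: Phi4_one_one[OF q])
  also have "\<dots> = Phi4 (int n) (int m) 1 1 z w q"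
    using nondegenerate_qprod_nonzero(1)[OF nd, of n] nondegenerate_qprod_nonzero(1)[OF nd, of m]
      nondegenerate_qprod_nonzero(2)[OF nd, of 1 n] nondegenerate_qprod_nonzero(3)[OF nd, of 1 m]
      nondegenerate_qprod_nonzero(4)[OF nd, of 1 "n + m"]
    by (simp add: sum_Kc_Phi[OF q] Phi4_one_one[OF q nd])
  finally show ?thesis .
qed

lemma sum_Kc_Phi4:
  assumes q: "q \<noteq> 0" and nd: "nondegenerate (n + m + 1) z w q"
  shows "(\<Sum>r\<le>n. \<Sum>s\<le>m. Kc n m r s (z / q) w q * Phi4 (int r) (int s) u v z w q)
    = Phi4 (int n) (int m) (u * z) (v * w) z w q"
proof -
  have "(\<Sum>r\<le>n. \<Sum>s\<le>m. Kc n m r s (z / q) w q * Phi4 (int r) (int s) u v z w q)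
      = (\<Sum>r\<le>n. \<Sum>s\<le>m. Kc n m r s (z / q) w q * Phi (int r) (int s) (z / q) w q)
        - u * z / qpoch z q 2 * (\<Sum>r\<le>n. \<Sum>s\<le>m. Kc n m r s (z / q) w q * Phi (int r - 1) (int s) (z * q) (w / q) q)
        + u * v * z * w\<^sup>2 / (qpoch w q 2 * qpoch (z * w) q 2)
          * (\<Sum>r\<le>n. \<Sum>s\<le>m. Kc n m r s (z / q) w q * Phi (int r - 1) (int s - 1) z (w * q) q)"
    unfolding Phi4_def by (simp add: sum_subtractf sum.distrib sum_distrib_left algebra_simps)
  also have "\<dots> = Phi4 (int n) (int m) (u * z) (v * w) z w q"
    unfolding sum_Kc_Phi_shift[OF q nd] sum_Kc_Phi_pred_left[OF q nd] sum_Kc_Phi_pred_both[OF q nd] Phi4_def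
    by (simp add: algebra_simps)
  finally show ?thesis .
qed

theorem theorem4p4:
  fixes n m :: nat and u v z w q :: complex
  assumes "q \<noteq> 0"
    and "\<And>k::nat. k \<le> n + m + 1 \<Longrightarrow>
           q ^ (k + 1) \<noteq> 1 \<and> z * q ^ k \<noteq> 1 \<and> w * q ^ k \<noteq> 1 \<and> z * w * q ^ k \<noteq> 1"
  shows "((\<Sum>r\<in>{0..n}. \<Sum>s\<in>{0..m}. Kc n m r s z w q * Phi4 (int r) (int s) 1 1 z w q)
           = Phi4 (int n) (int m) 1 1 z w q)
       \<and> ((\<Sum>r\<in>{0..n}. \<Sum>s\<in>{0..m}. Kc n m r s (z / q) w q * Phi4 (int r) (int s) u v z w q)
           = Phi4 (int n) (int m) (u * z) (v * w) z w q)"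
proof -
  have "nondegenerate (n + m + 1) z w q"
    using assms(2) by (simp add: nondegenerate_def)
  then show ?thesis
    using sum_Kc_Phi4_one_one[OF assms(1)] sum_Kc_Phi4[OF assms(1)] by (simp add: atLeast0AtMost)
qed

end
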